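(* Let $G$ and $H$ be rooted graphs. Then for any integers $g,j\ge 0$ and $h\ge 1$, \begin{align*} X_{S_j^{gh}(G,H)}&=\sum_{i=0}^{j}X_{P_i}\,X_{P^{g+h+j-i}(G,H)}-\sum_{i=1}^{j}X_{G^{g+i-1}}\,X_{H^{h+j-i}},\quad\text{and}\\ X_{S_{hj}^{g}(G)}&=\sum_{i=0}^{j}X_{P_i}\,X_{G^{g+j-i+h}}-\sum_{i=1}^{j}X_{P_{i+h}}\,X_{G^{g+j-i}}. \end{align*}
   Context: All graphs are finite simple graphs. The chromatic symmetric function of a graph $G$ is $X_G=\sum_{\kappa}\prod_{v\in V(G)}x_{\kappa(v)}$, where $\kappa$ ranges over proper colorings $\kappa:V(G)\to\{1,2,\dots\}$; the empty graph has $X=1$. $P_i$ is the path on $i$ vertices ($P_0$ empty). For nonnegative integers $\tau_1,\tau_2,\tau_3$ and rooted graphs $(G_i,u_i)$, $S^{\tau_1\tau_2\tau_3}(G_1,G_2,G_3)$ is obtained by taking a center vertex $c$ and three paths from $c$, disjoint except at $c$, of lengths $\tau_1,\tau_2,\tau_3$, and identifying $u_i$ with the far end of the $i$-th path (with $c$ if $\tau_i=0$), the $G_i$ being disjoint. Notation: $S_j^{gh}(G,H)=S^{ghj}(G,H,K_1)$ and $S_{hj}^g(G)=S^{ghj}(G,K_1,K_1)$ (legs ending in a single vertex are plain paths). For rooted graphs $(G,u)$, $(H,v)$ and $k\ge0$, $P^k(G,H)$ is obtained from the disjoint union of $G$ and $H$ by adding a path of length $k$ joining $u$ and $v$ (for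 $k=0$ identifying them), and $G^k=P^k(G,K_1)$ is $G$ with a pendant path of length $k$ at its root. *)

theory Defs
  imports "HOL-Library.Poly_Mapping" "HOL-Library.FuncSet"
begin

type_synonym 'v graph = "'v set \<times> 'v set set"
type_synonym 'v rgraph = "'v graph \<times> 'v"

definition wf_graph :: "'v graph \<Rightarrow> bool" where
  "wf_graph Gr \<longleftrightarrow> finite (fst Gr) \<and> (\<forall>e\<in>snd Gr. e \<subseteq> fst Gr \<and> card e = 2)"

definition wf_rgraph :: "'v rgraph \<Rightarrow> bool" where
  "wf_rgraph R \<longleftrightarrow> wf_graph (fst R) \<and> snd R \<in> fst (fst R)"

text \<open>A symmetric function (formal power series in x_0, x_1, ...) is represented by its
coefficient function on monomials; a monomial is a finitely supported exponent vector.\<close>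
type_synonym sf = "(nat \<Rightarrow>\<^sub>0 nat) \<Rightarrow> int"

definition proper_col :: "'v graph \<Rightarrow> ('v \<Rightarrow> nat) \<Rightarrow> bool" where
  "proper_col Gr \<kappa> \<longleftrightarrow> (\<forall>x y. {x, y} \<in> snd Gr \<longrightarrow> \<kappa> x \<noteq> \<kappa> y)"

text \<open>Coefficient of x^m in X_G: the number of proper colourings
  \<kappa> : V \<rightarrow> {1,2,...} in which colour c is used exactly m(c) times.\<close>
definition csf :: "'v graph \<Rightarrow> sf" where
  "csf Gr m = int (card {\<kappa> \<in> fst Gr \<rightarrow>\<^sub>E {1..}. proper_col Gr \<kappa> \<and>
                         (\<forall>c. card {v \<in> fst Gr. \<kappa> v = c} = Poly_Mapping.lookup m c)})"

definition sf_mult :: "sf \<Rightarrow> sf \<Rightarrow> sf" where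
  "sf_mult F G m = (\<Sum>p \<in> {(a, b). a + b = m}. F (fst p) * G (snd p))"

definition path_graph :: "nat \<Rightarrow> nat graph" where
  "path_graph n = ({0..<n}, {{i, Suc i} | i. Suc i < n})"

definition K1 :: "unit rgraph" where
  "K1 = (({()}, {}), ())"

text \<open>A path of length t from a to b with inner vertices mid 1, ..., mid (t-1).\<close>
definition pathpt :: "'w \<Rightarrow> 'w \<Rightarrow> (nat \<Rightarrow> 'w) \<Rightarrow> nat \<Rightarrow> nat \<Rightarrow> 'w" where
  "pathpt a b mid t s = (if s = 0 then a else if s = t then b else mid s)"

definition leg_V :: "'w \<Rightarrow> 'w \<Rightarrow> (nat \<Rightarrow> 'w) \<Rightarrow> nat \<Rightarrow> 'w set" where
  "leg_V a b mid t = pathpt a b mid t ` {0..t}"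

definition leg_E :: "'w \<Rightarrow> 'w \<Rightarrow> (nat \<Rightarrow> 'w) \<Rightarrow> nat \<Rightarrow> 'w set set" where
  "leg_E a b mid t = {{pathpt a b mid t s, pathpt a b mid t (Suc s)} | s. s < t}"

text \<open>P^k(G,H): disjoint union of G and H plus a path of length k joining the roots
  (roots identified when k = 0).\<close>
definition Pk :: "nat \<Rightarrow> 'a rgraph \<Rightarrow> 'b rgraph \<Rightarrow> (('a + 'b) + nat) graph" where
  "Pk k G H =
    (let u = snd G; v = snd H;
         embG = (\<lambda>x. Inl (Inl x));
         embH = (\<lambda>y. if k = 0 \<and> y = v then Inl (Inl u) else Inl (Inr y));
         a = embG u; b = embH v; mid = (\<lambda>s. Inr s)
     in (embG ` fst (fst G) \<union> embH ` fst (fst H) \<union> leg_V a b mid k,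
         (\<lambda>e. embG ` e) ` snd (fst G) \<union> (\<lambda>e. embH ` e) ` snd (fst H) \<union> leg_E a b mid k))"

text \<open>G^k = P^k(G, K1): G with a pendant path of length k at its root.\<close>
definition pend :: "'a rgraph \<Rightarrow> nat \<Rightarrow> (('a + unit) + nat) graph" where
  "pend G k = Pk k G K1"

text \<open>S^{t1 t2 t3}(G1,G2,G3): centre c = Inr (0,0), three legs of lengths t1,t2,t3 from c,
  the root of G_i identified with the far end of leg i (with c when t_i = 0).\<close>
definition star :: "nat \<Rightarrow> nat \<Rightarrow> nat \<Rightarrow> 'a rgraph \<Rightarrow> 'b rgraph \<Rightarrow> 'c rgraph
                    \<Rightarrow> (('a + 'b + 'c) + nat \<times> nat) graph" where
  "star t1 t2 t3 G1 G2 G3 =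
    (let c = Inr (0, 0); u1 = snd G1; u2 = snd G2; u3 = snd G3;
         emb1 = (\<lambda>x. if t1 = 0 \<and> x = u1 then c else Inl (Inl x));
         emb2 = (\<lambda>x. if t2 = 0 \<and> x = u2 then c else Inl (Inr (Inl x)));
         emb3 = (\<lambda>x. if t3 = 0 \<and> x = u3 then c else Inl (Inr (Inr x)))
     in ({c} \<union> emb1 ` fst (fst G1) \<union> emb2 ` fst (fst G2) \<union> emb3 ` fst (fst G3)
           \<union> leg_V c (emb1 u1) (\<lambda>s. Inr (1, s)) t1
           \<union> leg_V c (emb2 u2) (\<lambda>s. Inr (2, s)) t2
           \<union> leg_V c (emb3 u3) (\<lambda>s. Inr (3, s)) t3,
         (\<lambda>e. emb1 ` e) ` snd (fst G1) \<union> (\<lambda>e. emb2 ` e) ` snd (fst G2)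
           \<union> (\<lambda>e. emb3 ` e) ` snd (fst G3)
           \<union> leg_E c (emb1 u1) (\<lambda>s. Inr (1, s)) t1
           \<union> leg_E c (emb2 u2) (\<lambda>s. Inr (2, s)) t2
           \<union> leg_E c (emb3 u3) (\<lambda>s. Inr (3, s)) t3))"

text \<open>S_j^{gh}(G,H) = S^{ghj}(G,H,K1) and S_{hj}^g(G) = S^{ghj}(G,K1,K1).\<close>
definition S2 :: "nat \<Rightarrow> nat \<Rightarrow> nat \<Rightarrow> 'a rgraph \<Rightarrow> 'b rgraph \<Rightarrow> (('a + 'b + unit) + nat \<times> nat) graph" where
  "S2 g h j G H = star g h j G H K1"

definition S1 :: "nat \<Rightarrow> nat \<Rightarrow> nat \<Rightarrow> 'a rgraph \<Rightarrow> (('a + unit + unit) + nat \<times> nat) graph" where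
  "S1 g h j G = star g h j G K1 K1"

end

theory Submission
  imports Defs
begin

text \<open>Lay out \<open>S_j^{gh}(G, H) = S^{ghj}(G, H, K1)\<close> along a spine that runs from the root of \<open>G\<close>
  through leg 1, the centre \<open>c\<close> and leg 3, and then through leg 2 to the root of \<open>H\<close>; the first
  vertex \<open>x\<close> of leg 2 is attached to \<open>c\<close> by an extra edge. With \<open>w\<close> the first vertex of leg 3,
  writing the star as \<open>E + cw + cx\<close>, the chromatic symmetric function satisfies triple deletion
  \<open>X(E + cw + cx) - X(E + cx) = X(E + cw + wx) - X(E + wx)\<close>. Here \<open>E + cx\<close> is \<open>P_j\<close> (the
  detached leg 3) beside \<open>P^{g+h}(G, H)\<close>, \<open>E + cw + wx\<close> is \<open>S^{g+1, h, j-1}\<close>, and \<open>E + wx\<close> is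
  \<open>G^g\<close> beside \<open>H^{h+j-1}\<close>. As \<open>X\<close> is multiplicative on disjoint unions,
  \<open>X_{S^{ghj}} = X_{S^{g+1,h,j-1}} + X_{P_j} X_{P^{g+h}(G,H)} - X_{G^g} X_{H^{h+j-1}}\<close>, and
  unrolling this down to \<open>j = 0\<close>, where \<open>X_{P_0} = 1\<close>, gives the first formula. The second one
  is the case \<open>H = K1\<close>, in which \<open>H^k = P_{k+1}\<close>.\<close>

section \<open>Colourings and the chromatic symmetric function\<close>

definition colorings :: "'v graph \<Rightarrow> (nat \<Rightarrow>\<^sub>0 nat) \<Rightarrow> ('v \<Rightarrow> nat) set" where
  "colorings X m = {\<kappa> \<in> fst X \<rightarrow>\<^sub>E {1..}. proper_col X \<kappa> \<and>
                      (\<forall>c. card {v \<in> fst X. \<kappa> v = c} = Poly_Mapping.lookup m c)}"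

lemma csf_eq_card_colorings: "csf X m = int (card (colorings X m))"
  by (simp add: csf_def colorings_def)

lemma finite_colorings:
  assumes "finite (fst X)"
  shows "finite (colorings X m)"
proof (rule finite_subset)
  show "colorings X m \<subseteq> fst X \<rightarrow>\<^sub>E Poly_Mapping.keys m"
  proof
    fix \<kappa> assume \<kappa>: "\<kappa> \<in> colorings X m"
    have "card {w \<in> fst X. \<kappa> w = \<kappa> v} \<noteq> 0" if "v \<in> fst X" for v
      using that assms by auto
    with \<kappa> show "\<kappa> \<in> fst X \<rightarrow>\<^sub>E Poly_Mapping.keys m"
      by (auto simp: colorings_def in_keys_iff PiE_iff)
  qed
  show "finite (fst X \<rightarrow>\<^sub>E Poly_Mapping.keys m)"
    using assms by (simp add: finite_PiE)
qed

definition color_count :: "'v set \<Rightarrow> ('v \<Rightarrow> nat) \<Rightarrow> nat \<Rightarrow>\<^sub>0 nat" where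
  "color_count V \<kappa> = Abs_poly_mapping (\<lambda>c. card {v \<in> V. \<kappa> v = c})"

lemma lookup_color_count:
  assumes "finite V"
  shows "Poly_Mapping.lookup (color_count V \<kappa>) c = card {v \<in> V. \<kappa> v = c}"
proof -
  have "{c. card {v \<in> V. \<kappa> v = c} \<noteq> 0} \<subseteq> \<kappa> ` V"
    by (auto simp: card_gt_0_iff)
  then have "finite {c. card {v \<in> V. \<kappa> v = c} \<noteq> 0}"
    using assms by (simp add: finite_subset)
  then show ?thesis
    by (simp add: color_count_def)
qed

lemma colorings_altdef:
  assumes "finite (fst X)"
  shows "colorings X m = {\<kappa> \<in> fst X \<rightarrow>\<^sub>E {1..}. proper_col X \<kappa> \<and> color_count (fst X) \<kappa> = m}"
  using assms by (auto simp: colorings_def poly_mapping_eq_iff fun_eq_iff lookup_color_count)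

lemma color_count_cong:
  assumes "\<And>v. v \<in> V \<Longrightarrow> \<kappa> v = \<kappa>' v"
  shows "color_count V \<kappa> = color_count V \<kappa>'"
proof -
  from assms have "{v \<in> V. \<kappa> v = c} = {v \<in> V. \<kappa>' v = c}" for c
    by auto
  then show ?thesis
    by (simp add: color_count_def)
qed

lemma color_count_Un:
  assumes "finite V\<^sub>1" "finite V\<^sub>2" "V\<^sub>1 \<inter> V\<^sub>2 = {}"
  shows "color_count (V\<^sub>1 \<union> V\<^sub>2) \<kappa> = color_count V\<^sub>1 \<kappa> + color_count V\<^sub>2 \<kappa>"
proof (rule poly_mapping_eqI)
  fix c
  have "{v \<in> V\<^sub>1 \<union> V\<^sub>2. \<kappa> v = c} = {v \<in> V\<^sub>1. \<kappa> v = c} \<union> {v \<in> V\<^sub>2. \<kappa> v = c}"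
    by auto
  then show "Poly_Mapping.lookup (color_count (V\<^sub>1 \<union> V\<^sub>2) \<kappa>) c
           = Poly_Mapping.lookup (color_count V\<^sub>1 \<kappa> + color_count V\<^sub>2 \<kappa>) c"
    using assms by (simp add: lookup_add lookup_color_count card_Un_disjoint disjoint_iff)
qed

lemma proper_col_insert_edge:
  "proper_col (V, insert {a, b} E) \<kappa> \<longleftrightarrow> proper_col (V, E) \<kappa> \<and> \<kappa> a \<noteq> \<kappa> b"
  unfolding proper_col_def by (auto simp: doubleton_eq_iff)

lemma proper_col_Un:
  "proper_col (V\<^sub>1 \<union> V\<^sub>2, E\<^sub>1 \<union> E\<^sub>2) \<kappa> \<longleftrightarrow> proper_col (V\<^sub>1, E\<^sub>1) \<kappa> \<and> proper_col (V\<^sub>2, E\<^sub>2) \<kappa>"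
  unfolding proper_col_def by auto

lemma proper_col_cong:
  assumes "\<forall>e\<in>E. e \<subseteq> V" and "\<And>v. v \<in> V \<Longrightarrow> \<kappa> v = \<kappa>' v"
  shows "proper_col (V, E) \<kappa> \<longleftrightarrow> proper_col (V, E) \<kappa>'"
proof -
  have "\<kappa> x = \<kappa>' x \<and> \<kappa> y = \<kappa>' y" if "{x, y} \<in> E" for x y
    using assms that by blast
  then show ?thesis
    unfolding proper_col_def by auto
qed

lemma proper_col_inj_image:
  assumes inj: "inj_on f V" and edges: "\<forall>e\<in>E. e \<subseteq> V"
  shows "proper_col (f ` V, (\<lambda>e. f ` e) ` E) \<kappa> \<longleftrightarrow> proper_col (V, E) (\<kappa> \<circ> f)"
proof -
  have "{x, y} \<in> (\<lambda>e. f ` e) ` E \<longleftrightarrow> (\<exists>a b. {a, b} \<in> E \<and> x = f a \<and> y = f b)" for x y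
  proof
    assume "{x, y} \<in> (\<lambda>e. f ` e) ` E"
    then obtain e where e: "e \<in> E" "{x, y} = f ` e" by auto
    then obtain a b where ab: "a \<in> e" "b \<in> e" "x = f a" "y = f b"
      by (metis image_iff insertCI)
    have "e \<subseteq> {a, b}"
    proof
      fix z assume "z \<in> e"
      then have "f z = f a \<or> f z = f b" using e(2) ab by (metis image_eqI insertE singletonD)
      then show "z \<in> {a, b}"
        using inj_onD[OF inj] \<open>z \<in> e\<close> ab(1,2) e(1) edges by blast
    qed
    then have "e = {a, b}" using ab(1,2) by blast
    then show "\<exists>a b. {a, b} \<in> E \<and> x = f a \<and> y = f b" using e(1) ab(3,4) by blast
  next
    assume "\<exists>a b. {a, b} \<in> E \<and> x = f a \<and> y = f b"
    then obtain a b where "{a, b} \<in> E" "{x, y} = f ` {a, b}" by auto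
    then show "{x, y} \<in> (\<lambda>e. f ` e) ` E" by blast
  qed
  then show ?thesis
    unfolding proper_col_def snd_conv comp_def by (simp only:) blast
qed

lemma colorings_insert_edge:
  "colorings (V, insert {a, b} E) m = {\<kappa> \<in> colorings (V, E) m. \<kappa> a \<noteq> \<kappa> b}"
  unfolding colorings_def by (auto simp: proper_col_insert_edge)

lemma card_split_filter:
  assumes "finite A"
  shows "card A = card {a \<in> A. \<not> P a} + card {a \<in> A. P a}"
  using assms by (subst card_Un_disjoint[symmetric]) (auto intro: arg_cong[where f = card])

text \<open>Triple deletion: both differences are minus the number of colourings of the graph with
  edge set \<open>E\<close> plus \<open>{c, x}\<close> (equivalently \<open>{w, x}\<close>) in which \<open>c\<close> and \<open>w\<close> share a colour.\<close>
lemma csf_triple_deletion: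
  assumes "finite V"
  shows "csf (V, insert {c, w} (insert {c, x} E)) m - csf (V, insert {c, x} E) m
       = csf (V, insert {c, w} (insert {w, x} E)) m - csf (V, insert {w, x} E) m"
proof -
  have same_colour: "{\<kappa> \<in> colorings (V, insert {c, x} E) m. \<kappa> c = \<kappa> w}
                   = {\<kappa> \<in> colorings (V, insert {w, x} E) m. \<kappa> c = \<kappa> w}"
    unfolding colorings_def by (auto simp: proper_col_insert_edge)
  have "csf (V, insert {c, w} F) m - csf (V, F) m
      = - int (card {\<kappa> \<in> colorings (V, F) m. \<kappa> c = \<kappa> w})" for F
    using card_split_filter[of "colorings (V, F) m" "\<lambda>\<kappa>. \<kappa> c = \<kappa> w"] assms
    by (simp add: csf_eq_card_colorings colorings_insert_edge finite_colorings)
  then show ?thesis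
    by (simp only: same_colour)
qed

lemma card_fiber_inj_image:
  assumes "inj_on f V"
  shows "card {w \<in> f ` V. \<kappa> w = c} = card {v \<in> V. \<kappa> (f v) = c}"
proof -
  have "{w \<in> f ` V. \<kappa> w = c} = f ` {v \<in> V. \<kappa> (f v) = c}" by auto
  moreover have "inj_on f {v \<in> V. \<kappa> (f v) = c}" using assms by (rule inj_on_subset) auto
  ultimately show ?thesis by (simp add: card_image)
qed

lemma bij_betw_colorings_inj_image:
  assumes inj: "inj_on f V" and edges: "\<forall>e\<in>E. e \<subseteq> V"
  shows "bij_betw (\<lambda>\<kappa>. restrict (\<kappa> \<circ> f) V) (colorings (f ` V, (\<lambda>e. f ` e) ` E) m) (colorings (V, E) m)"
proof -
  let ?W = "f ` V" and ?F = "(\<lambda>e. f ` e) ` E" and ?g = "inv_into V f"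
  have g_f: "restrict (\<kappa> \<circ> ?g) ?W (f v) = \<kappa> v" if "v \<in> V" for \<kappa> v
    using that inj by simp
  show ?thesis
  proof (rule bij_betw_byWitness[where f' = "\<lambda>\<kappa>. restrict (\<kappa> \<circ> ?g) ?W"])
    show "\<forall>\<kappa>\<in>colorings (?W, ?F) m. restrict (restrict (\<kappa> \<circ> f) V \<circ> ?g) ?W = \<kappa>"
      by (auto simp: colorings_def fun_eq_iff PiE_iff extensional_def inv_into_into f_inv_into_f)
    show "\<forall>\<kappa>\<in>colorings (V, E) m. restrict (restrict (\<kappa> \<circ> ?g) ?W \<circ> f) V = \<kappa>"
      using inj by (auto simp: colorings_def fun_eq_iff PiE_iff extensional_def)
    show "(\<lambda>\<kappa>. restrict (\<kappa> \<circ> f) V) ` colorings (?W, ?F) m \<subseteq> colorings (V, E) m"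
    proof clarify
      fix \<kappa> assume "\<kappa> \<in> colorings (?W, ?F) m"
      moreover have "proper_col (V, E) (restrict (\<kappa> \<circ> f) V) \<longleftrightarrow> proper_col (?W, ?F) \<kappa>"
        using proper_col_cong[OF edges, of "restrict (\<kappa> \<circ> f) V" "\<kappa> \<circ> f"]
          proper_col_inj_image[OF inj edges] by simp
      moreover have "{v \<in> V. restrict (\<kappa> \<circ> f) V v = c} = {v \<in> V. \<kappa> (f v) = c}" for c
        by auto
      ultimately show "restrict (\<kappa> \<circ> f) V \<in> colorings (V, E) m"
        by (auto simp: colorings_def PiE_iff card_fiber_inj_image[OF inj])
    qed
    show "(\<lambda>\<kappa>. restrict (\<kappa> \<circ> ?g) ?W) ` colorings (V, E) m \<subseteq> colorings (?W, ?F) m"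
    proof clarify
      fix \<kappa> assume \<kappa>: "\<kappa> \<in> colorings (V, E) m"
      have "proper_col (V, E) (restrict (\<kappa> \<circ> ?g) ?W \<circ> f) \<longleftrightarrow> proper_col (V, E) \<kappa>"
        by (rule proper_col_cong[OF edges]) (use inj in simp)
      then have "proper_col (?W, ?F) (restrict (\<kappa> \<circ> ?g) ?W) \<longleftrightarrow> proper_col (V, E) \<kappa>"
        using proper_col_inj_image[OF inj edges] by simp
      moreover have "card {w \<in> ?W. restrict (\<kappa> \<circ> ?g) ?W w = c} = card {v \<in> V. \<kappa> v = c}" for c
        unfolding card_fiber_inj_image[OF inj] by (metis (no_types, lifting) g_f)
      ultimately show "restrict (\<kappa> \<circ> ?g) ?W \<in> colorings (?W, ?F) m"
        using \<kappa> by (auto simp: colorings_def PiE_iff inv_into_into)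
    qed
  qed
qed

lemma csf_inj_image:
  assumes "inj_on f V" and "\<forall>e\<in>E. e \<subseteq> V"
  shows "csf (f ` V, (\<lambda>e. f ` e) ` E) = csf (V, E)"
  using bij_betw_same_card[OF bij_betw_colorings_inj_image[OF assms]]
  by (simp add: fun_eq_iff csf_eq_card_colorings)

lemma finite_additive_splits: "finite {(a, b). a + b = (m :: 'a \<Rightarrow>\<^sub>0 nat)}"
proof -
  let ?A = "{a. \<exists>b. a + b = m}"
  let ?r = "\<lambda>a. restrict (Poly_Mapping.lookup a) (Poly_Mapping.keys m)"
  have le: "Poly_Mapping.lookup a c \<le> Poly_Mapping.lookup m c" if "a \<in> ?A" for a c
    using that by (auto simp: lookup_add)
  have inj: "inj_on ?r ?A"
  proof (rule inj_onI)
    fix a a' assume a: "a \<in> ?A" and a': "a' \<in> ?A" and eq: "?r a = ?r a'"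
    show "a = a'"
    proof (rule poly_mapping_eqI)
      fix c
      show "Poly_Mapping.lookup a c = Poly_Mapping.lookup a' c"
        using fun_cong[OF eq, of c] le[OF a, of c] le[OF a', of c]
        by (cases "c \<in> Poly_Mapping.keys m") (auto simp: in_keys_iff)
    qed
  qed
  have "?r ` ?A \<subseteq> PiE (Poly_Mapping.keys m) (\<lambda>c. {..Poly_Mapping.lookup m c})"
    using le by auto
  then have "finite (?r ` ?A)"
    by (rule finite_subset) (simp add: finite_PiE)
  then have "finite ?A"
    using inj by (rule finite_imageD)
  moreover have "{(a, b). a + b = m} \<subseteq> (\<lambda>a. (a, m - a)) ` ?A"
    by (auto simp: image_iff)
  ultimately show ?thesis
    by (meson finite_imageI finite_subset)
qed

definition glue :: "'v set \<Rightarrow> ('v \<Rightarrow> nat) \<Rightarrow> ('v \<Rightarrow> nat) \<Rightarrow> 'v \<Rightarrow> nat" where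
  "glue V \<kappa>\<^sub>1 \<kappa>\<^sub>2 v = (if v \<in> V then \<kappa>\<^sub>1 v else \<kappa>\<^sub>2 v)"

context
  fixes V\<^sub>1 V\<^sub>2 :: "'v set" and E\<^sub>1 E\<^sub>2 :: "'v set set"
  assumes fin: "finite V\<^sub>1" "finite V\<^sub>2" and disj: "V\<^sub>1 \<inter> V\<^sub>2 = {}"
    and edges: "\<forall>e\<in>E\<^sub>1. e \<subseteq> V\<^sub>1" "\<forall>e\<in>E\<^sub>2. e \<subseteq> V\<^sub>2"
begin

lemma glue_colorings:
  assumes \<kappa>\<^sub>1: "\<kappa>\<^sub>1 \<in> colorings (V\<^sub>1, E\<^sub>1) a" and \<kappa>\<^sub>2: "\<kappa>\<^sub>2 \<in> colorings (V\<^sub>2, E\<^sub>2) b"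
  shows "color_count V\<^sub>1 (glue V\<^sub>1 \<kappa>\<^sub>1 \<kappa>\<^sub>2) = a" "color_count V\<^sub>2 (glue V\<^sub>1 \<kappa>\<^sub>1 \<kappa>\<^sub>2) = b"
    and "restrict (glue V\<^sub>1 \<kappa>\<^sub>1 \<kappa>\<^sub>2) V\<^sub>1 = \<kappa>\<^sub>1" "restrict (glue V\<^sub>1 \<kappa>\<^sub>1 \<kappa>\<^sub>2) V\<^sub>2 = \<kappa>\<^sub>2"
    and "glue V\<^sub>1 \<kappa>\<^sub>1 \<kappa>\<^sub>2 \<in> colorings (V\<^sub>1 \<union> V\<^sub>2, E\<^sub>1 \<union> E\<^sub>2) (a + b)"
proof -
  note col_def = colorings_altdef[of "(V, E)" for V E, simplified]
  show counts: "color_count V\<^sub>1 (glue V\<^sub>1 \<kappa>\<^sub>1 \<kappa>\<^sub>2) = a" "color_count V\<^sub>2 (glue V\<^sub>1 \<kappa>\<^sub>1 \<kappa>\<^sub>2) = b"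
    using \<kappa>\<^sub>1 \<kappa>\<^sub>2 disj fin by (auto simp: col_def glue_def intro!: color_count_cong)
  show "restrict (glue V\<^sub>1 \<kappa>\<^sub>1 \<kappa>\<^sub>2) V\<^sub>1 = \<kappa>\<^sub>1" "restrict (glue V\<^sub>1 \<kappa>\<^sub>1 \<kappa>\<^sub>2) V\<^sub>2 = \<kappa>\<^sub>2"
    using \<kappa>\<^sub>1 \<kappa>\<^sub>2 disj by (auto simp: colorings_def glue_def fun_eq_iff PiE_iff extensional_def)
  have "proper_col (V\<^sub>1, E\<^sub>1) (glue V\<^sub>1 \<kappa>\<^sub>1 \<kappa>\<^sub>2) \<longleftrightarrow> proper_col (V\<^sub>1, E\<^sub>1) \<kappa>\<^sub>1"
    by (rule proper_col_cong[OF edges(1)]) (simp add: glue_def)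
  moreover have "proper_col (V\<^sub>2, E\<^sub>2) (glue V\<^sub>1 \<kappa>\<^sub>1 \<kappa>\<^sub>2) \<longleftrightarrow> proper_col (V\<^sub>2, E\<^sub>2) \<kappa>\<^sub>2"
    by (rule proper_col_cong[OF edges(2)]) (use disj in \<open>auto simp: glue_def\<close>)
  ultimately have "proper_col (V\<^sub>1 \<union> V\<^sub>2, E\<^sub>1 \<union> E\<^sub>2) (glue V\<^sub>1 \<kappa>\<^sub>1 \<kappa>\<^sub>2)"
    using \<kappa>\<^sub>1 \<kappa>\<^sub>2 by (simp add: proper_col_Un colorings_def)
  with counts show "glue V\<^sub>1 \<kappa>\<^sub>1 \<kappa>\<^sub>2 \<in> colorings (V\<^sub>1 \<union> V\<^sub>2, E\<^sub>1 \<union> E\<^sub>2) (a + b)"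
    using \<kappa>\<^sub>1 \<kappa>\<^sub>2 fin disj by (auto simp: col_def color_count_Un glue_def PiE_iff extensional_def)
qed

lemma restrict_colorings:
  assumes \<kappa>: "\<kappa> \<in> colorings (V\<^sub>1 \<union> V\<^sub>2, E\<^sub>1 \<union> E\<^sub>2) m"
  shows "color_count V\<^sub>1 \<kappa> + color_count V\<^sub>2 \<kappa> = m"
    and "restrict \<kappa> V\<^sub>1 \<in> colorings (V\<^sub>1, E\<^sub>1) (color_count V\<^sub>1 \<kappa>)"
    and "restrict \<kappa> V\<^sub>2 \<in> colorings (V\<^sub>2, E\<^sub>2) (color_count V\<^sub>2 \<kappa>)"
    and "glue V\<^sub>1 (restrict \<kappa> V\<^sub>1) (restrict \<kappa> V\<^sub>2) = \<kappa>"
proof -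
  have "proper_col (V, E) (restrict \<kappa> V) \<longleftrightarrow> proper_col (V, E) \<kappa>"
    and "color_count V (restrict \<kappa> V) = color_count V \<kappa>"
    if "\<forall>e\<in>E. e \<subseteq> V" for V E
    using that by (auto intro!: proper_col_cong color_count_cong)
  then show "color_count V\<^sub>1 \<kappa> + color_count V\<^sub>2 \<kappa> = m"
    "restrict \<kappa> V\<^sub>1 \<in> colorings (V\<^sub>1, E\<^sub>1) (color_count V\<^sub>1 \<kappa>)"
    "restrict \<kappa> V\<^sub>2 \<in> colorings (V\<^sub>2, E\<^sub>2) (color_count V\<^sub>2 \<kappa>)"
    using \<kappa> fin disj edges
    by (auto simp: colorings_altdef color_count_Un proper_col_Un restrict_PiE_iff PiE_iff)
  show "glue V\<^sub>1 (restrict \<kappa> V\<^sub>1) (restrict \<kappa> V\<^sub>2) = \<kappa>"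
    using \<kappa> by (auto simp: colorings_def glue_def fun_eq_iff PiE_iff extensional_def)
qed

lemma csf_disjoint_union: "csf (V\<^sub>1 \<union> V\<^sub>2, E\<^sub>1 \<union> E\<^sub>2) = sf_mult (csf (V\<^sub>1, E\<^sub>1)) (csf (V\<^sub>2, E\<^sub>2))"
proof
  fix m
  let ?C = "colorings (V\<^sub>1 \<union> V\<^sub>2, E\<^sub>1 \<union> E\<^sub>2) m"
  let ?S = "SIGMA p:{(a, b). a + b = m}. colorings (V\<^sub>1, E\<^sub>1) (fst p) \<times> colorings (V\<^sub>2, E\<^sub>2) (snd p)"
  have "bij_betw (\<lambda>\<kappa>. ((color_count V\<^sub>1 \<kappa>, color_count V\<^sub>2 \<kappa>), (restrict \<kappa> V\<^sub>1, restrict \<kappa> V\<^sub>2))) ?C ?S"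
    by (rule bij_betw_byWitness[where f' = "\<lambda>(_, \<kappa>\<^sub>1, \<kappa>\<^sub>2). glue V\<^sub>1 \<kappa>\<^sub>1 \<kappa>\<^sub>2"])
      (auto simp: glue_colorings restrict_colorings)
  then have "card ?C = card ?S"
    by (rule bij_betw_same_card)
  also have "\<dots> = (\<Sum>p\<in>{(a, b). a + b = m}.
                     card (colorings (V\<^sub>1, E\<^sub>1) (fst p)) * card (colorings (V\<^sub>2, E\<^sub>2) (snd p)))"
    using fin by (simp add: card_SigmaI finite_additive_splits finite_colorings card_cartesian_product)
  finally show "csf (V\<^sub>1 \<union> V\<^sub>2, E\<^sub>1 \<union> E\<^sub>2) m = sf_mult (csf (V\<^sub>1, E\<^sub>1)) (csf (V\<^sub>2, E\<^sub>2)) m"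
    by (simp add: sf_mult_def csf_eq_card_colorings)
qed

end

lemma sf_mult_commute: "sf_mult F G = sf_mult G F"
  unfolding sf_mult_def fun_eq_iff
  by (intro allI sum.reindex_bij_witness[where i = prod.swap and j = prod.swap])
     (auto simp: add.commute mult.commute)

lemma csf_path_graph_0: "csf (path_graph 0) m = (if m = 0 then 1 else 0)"
proof -
  have "colorings (path_graph 0) m = (if m = 0 then {\<lambda>_. undefined} else {})"
    by (auto simp: colorings_def path_graph_def proper_col_def poly_mapping_eq_iff fun_eq_iff)
  then show ?thesis
    by (simp add: csf_eq_card_colorings)
qed

lemma sf_mult_csf_path_graph_0: "sf_mult (csf (path_graph 0)) F = F"
proof
  fix m
  have "sf_mult (csf (path_graph 0)) F m = (\<Sum>p\<in>{(a, b). a + b = m}. if p = (0, m) then F m else 0)"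
    unfolding sf_mult_def csf_path_graph_0 by (rule sum.cong) auto
  then show "sf_mult (csf (path_graph 0)) F m = F m"
    by (simp add: finite_additive_splits)
qed

section \<open>Graphs glued along a spine\<close>

definition path_edges :: "nat \<Rightarrow> nat set set" where
  "path_edges k = {{s, Suc s} | s. s < k}"

lemma path_edges_eq_image: "path_edges k = (\<lambda>s. {s, Suc s}) ` {..<k}"
  unfolding path_edges_def by auto

lemma image_path_edges: "(\<lambda>e. f ` e) ` path_edges k = {{f s, f (Suc s)} | s. s < k}"
  unfolding path_edges_eq_image image_image by auto

lemma image_image_edges:
  "\<forall>z\<in>A. f (e z) = e' z \<Longrightarrow> \<forall>d\<in>D. d \<subseteq> A \<Longrightarrow> (\<lambda>d. f ` d) ` (\<lambda>d. e ` d) ` D = (\<lambda>d. e' ` d) ` D"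
  by (force simp: image_image intro!: image_cong)

lemma path_edges_subset: "\<forall>e\<in>path_edges k. e \<subseteq> {0..k}"
  unfolding path_edges_def by auto

lemma leg_E_eq_image_path_edges: "leg_E a b mid k = (\<lambda>e. pathpt a b mid k ` e) ` path_edges k"
  unfolding leg_E_def image_path_edges ..

text \<open>The graph \<open>X\<close> is \<open>G\<close> and \<open>H\<close> joined through a spine \<open>\<phi> 0, \<dots>, \<phi> N\<close> carrying the edges \<open>T\<close>;
  the three embedded pieces overlap only in \<open>\<phi> 0 = eG (snd G)\<close> and \<open>\<phi> N = eH (snd H)\<close>.\<close>
definition spine_rep :: "'a rgraph \<Rightarrow> 'b rgraph \<Rightarrow> nat \<Rightarrow> nat set set \<Rightarrow> 'w graph
    \<Rightarrow> ('a \<Rightarrow> 'w) \<Rightarrow> ('b \<Rightarrow> 'w) \<Rightarrow> (nat \<Rightarrow> 'w) \<Rightarrow> bool" where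
  "spine_rep G H N T X eG eH \<phi> \<longleftrightarrow>
    inj_on eG (fst (fst G)) \<and> inj_on eH (fst (fst H)) \<and> inj_on \<phi> {0..N} \<and>
    \<phi> 0 = eG (snd G) \<and> \<phi> N = eH (snd H) \<and>
    (\<forall>x\<in>fst (fst G). \<forall>n\<in>{0..N}. eG x = \<phi> n \<longrightarrow> n = 0) \<and>
    (\<forall>y\<in>fst (fst H). \<forall>n\<in>{0..N}. eH y = \<phi> n \<longrightarrow> n = N) \<and>
    (\<forall>x\<in>fst (fst G). \<forall>y\<in>fst (fst H). eG x = eH y \<longrightarrow> x = snd G \<and> y = snd H \<and> N = 0) \<and>
    X = (eG ` fst (fst G) \<union> eH ` fst (fst H) \<union> \<phi> ` {0..N},
         (\<lambda>e. eG ` e) ` snd (fst G) \<union> (\<lambda>e. eH ` e) ` snd (fst H) \<union> (\<lambda>e. \<phi> ` e) ` T)"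

lemma spine_rep_transfer:
  assumes rep: "spine_rep ((VG, EG), u) ((VH, EH), v) N T X eG eH \<phi>"
    and rep': "spine_rep ((VG, EG), u) ((VH, EH), v) N T X' eG' eH' \<phi>'"
    and u: "u \<in> VG" and v: "v \<in> VH"
  obtains f where "\<forall>x\<in>VG. f (eG x) = eG' x" "\<forall>y\<in>VH. f (eH y) = eH' y"
    "\<forall>n\<in>{0..N}. f (\<phi> n) = \<phi>' n"
proof
  define f where "f z = (if z \<in> eG ` VG then eG' (inv_into VG eG z)
      else if z \<in> eH ` VH then eH' (inv_into VH eH z) else \<phi>' (inv_into {0..N} \<phi> z))" for z
  note R = rep[unfolded spine_rep_def, simplified] and R' = rep'[unfolded spine_rep_def, simplified]
  show fG: "\<forall>x\<in>VG. f (eG x) = eG' x"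
    using R by (simp add: f_def)
  show "\<forall>y\<in>VH. f (eH y) = eH' y"
  proof
    fix y assume y: "y \<in> VH"
    show "f (eH y) = eH' y"
    proof (cases "eH y \<in> eG ` VG")
      case True
      then obtain x where x: "x \<in> VG" "eH y = eG x" by auto
      then have "x = u \<and> y = v \<and> N = 0" using R y by metis
      then show ?thesis using x fG R' by metis
    next
      case False
      then show ?thesis using R y by (simp add: f_def)
    qed
  qed
  show "\<forall>n\<in>{0..N}. f (\<phi> n) = \<phi>' n"
  proof
    fix n assume n: "n \<in> {0..N}"
    consider x where "x \<in> VG" "\<phi> n = eG x" | y where "y \<in> VH" "\<phi> n = eH y" "\<phi> n \<notin> eG ` VG"
      | "\<phi> n \<notin> eG ` VG" "\<phi> n \<notin> eH ` VH"
      by blast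
    then show "f (\<phi> n) = \<phi>' n"
    proof cases
      case 1
      then have "n = 0" "x = u" using R n u by (metis inj_onD)+
      then show ?thesis using 1 R R' by (simp add: f_def)
    next
      case 2
      then have "n = N" "y = v" using R n v by (metis inj_onD)+
      then show ?thesis using 2 R R' by (simp add: f_def)
    qed (use n R in \<open>simp add: f_def\<close>)
  qed
qed

lemma csf_spine_rep_eq:
  assumes wf: "wf_rgraph G" "wf_rgraph H" and T: "\<forall>e\<in>T. e \<subseteq> {0..N}"
    and rep: "spine_rep G H N T X eG eH \<phi>" and rep': "spine_rep G H N T X' eG' eH' \<phi>'"
  shows "csf X = csf X'"
proof -
  obtain VG EG u VH EH v where G: "G = ((VG, EG), u)" and H: "H = ((VH, EH), v)"
    by (metis prod.collapse)
  have u: "u \<in> VG" and v: "v \<in> VH" and EG: "\<forall>e\<in>EG. e \<subseteq> VG" and EH: "\<forall>e\<in>EH. e \<subseteq> VH"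
    using wf by (auto simp: G H wf_rgraph_def wf_graph_def)
  obtain f where f: "\<forall>x\<in>VG. f (eG x) = eG' x" "\<forall>y\<in>VH. f (eH y) = eH' y"
      "\<forall>n\<in>{0..N}. f (\<phi> n) = \<phi>' n"
    using spine_rep_transfer[OF rep[unfolded G H] rep'[unfolded G H] u v] by blast
  obtain f' where f': "\<forall>x\<in>VG. f' (eG' x) = eG x" "\<forall>y\<in>VH. f' (eH' y) = eH y"
      "\<forall>n\<in>{0..N}. f' (\<phi>' n) = \<phi> n"
    using spine_rep_transfer[OF rep'[unfolded G H] rep[unfolded G H] u v] by blast
  let ?V = "eG ` VG \<union> eH ` VH \<union> \<phi> ` {0..N}"
  let ?E = "(\<lambda>e. eG ` e) ` EG \<union> (\<lambda>e. eH ` e) ` EH \<union> (\<lambda>e. \<phi> ` e) ` T"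
  have X: "X = (?V, ?E)"
    using rep by (simp add: spine_rep_def G H)
  have inj: "inj_on f ?V"
    by (rule inj_on_inverseI[where g = f']) (use f f' in auto)
  have edges: "\<forall>e\<in>?E. e \<subseteq> ?V"
    using EG EH T by blast
  have "f ` ?V = eG' ` VG \<union> eH' ` VH \<union> \<phi>' ` {0..N}"
    using f unfolding image_Un image_image by (intro arg_cong2[where f = "(\<union>)"] image_cong) auto
  moreover have "(\<lambda>e. f ` e) ` ?E = (\<lambda>e. eG' ` e) ` EG \<union> (\<lambda>e. eH' ` e) ` EH \<union> (\<lambda>e. \<phi>' ` e) ` T"
    by (simp only: image_Un image_image_edges[where f = f, OF f(1) EG]
        image_image_edges[where f = f, OF f(2) EH] image_image_edges[where f = f, OF f(3) T])
  ultimately have "X' = (f ` ?V, (\<lambda>e. f ` e) ` ?E)"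
    using rep' by (simp add: spine_rep_def G H)
  then show ?thesis
    using csf_inj_image[OF inj edges] X by simp
qed

definition spine_embG :: "'a \<Rightarrow> 'a \<Rightarrow> ('a + 'b) + nat" where
  "spine_embG u x = (if x = u then Inr 0 else Inl (Inl x))"

definition spine_embH :: "nat \<Rightarrow> 'b \<Rightarrow> 'b \<Rightarrow> ('a + 'b) + nat" where
  "spine_embH N v y = (if y = v then Inr N else Inl (Inr y))"

text \<open>The normal form of a spine representation. Unlike in \<open>Pk\<close>, the roots are replaced by
  spine vertices, so that the spine vertex \<open>s\<close> is always \<open>Inr s\<close>.\<close>
definition spine_graph :: "nat \<Rightarrow> nat set set \<Rightarrow> 'a rgraph \<Rightarrow> 'b rgraph \<Rightarrow> (('a + 'b) + nat) graph" where
  "spine_graph N T G H =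
    (spine_embG (snd G) ` fst (fst G) \<union> spine_embH N (snd H) ` fst (fst H) \<union> Inr ` {0..N},
     (\<lambda>e. spine_embG (snd G) ` e) ` snd (fst G) \<union> (\<lambda>e. spine_embH N (snd H) ` e) ` snd (fst H)
       \<union> (\<lambda>e. Inr ` e) ` T)"

lemma spine_rep_reindex:
  assumes "inj_on \<sigma> {0..M}" "\<sigma> 0 = 0" "\<sigma> M = N"
  shows "spine_rep ((VG, EG), u) ((VH, EH), v) M T
     (spine_embG u ` VG \<union> spine_embH N v ` VH \<union> Inr ` \<sigma> ` {0..M},
      (\<lambda>e. spine_embG u ` e) ` EG \<union> (\<lambda>e. spine_embH N v ` e) ` EH \<union> (\<lambda>e. Inr ` \<sigma> ` e) ` T)
     (spine_embG u) (spine_embH N v) (Inr \<circ> \<sigma>)"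
  using assms
  by (auto simp: spine_rep_def spine_embG_def spine_embH_def inj_on_def image_image image_comp
      split: if_splits)

lemma spine_graph_spine_rep:
  "spine_rep G H N T (spine_graph N T G H) (spine_embG (snd G)) (spine_embH N (snd H)) Inr"
  using spine_rep_reindex[of id N N "fst (fst G)" "snd (fst G)" "snd G"
      "fst (fst H)" "snd (fst H)" "snd H" T]
  by (simp add: spine_graph_def)

lemma csf_spine_rep:
  assumes "wf_rgraph G" "wf_rgraph H" "\<forall>e\<in>T. e \<subseteq> {0..N}" "spine_rep G H N T X eG eH \<phi>"
  shows "csf X = csf (spine_graph N T G H)"
  using csf_spine_rep_eq[OF assms spine_graph_spine_rep] .

lemma Pk_spine_rep:
  "spine_rep G H k (path_edges k) (Pk k G H) (\<lambda>x. Inl (Inl x))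
     (\<lambda>y. if k = 0 \<and> y = snd H then Inl (Inl (snd G)) else Inl (Inr y))
     (pathpt (Inl (Inl (snd G))) (if k = 0 then Inl (Inl (snd G)) else Inl (Inr (snd H))) Inr k)"
  unfolding spine_rep_def Pk_def Let_def leg_V_def leg_E_eq_image_path_edges
  by (auto simp: inj_on_def pathpt_def split: if_splits)

lemma csf_Pk_eq_spine_graph:
  assumes "wf_rgraph G" "wf_rgraph H"
  shows "csf (Pk k G H) = csf (spine_graph k (path_edges k) G H)"
  by (rule csf_spine_rep[OF assms path_edges_subset Pk_spine_rep])

lemma wf_K1: "wf_rgraph K1"
  by (simp add: wf_rgraph_def wf_graph_def K1_def)

lemma csf_eq_csf_pend:
  assumes wf: "wf_rgraph ((V, E), u)" and e: "inj_on e V" and \<phi>: "inj_on \<phi> {0..M}"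
    and root: "\<phi> 0 = e u" and meet: "\<And>x n. x \<in> V \<Longrightarrow> n \<le> M \<Longrightarrow> e x = \<phi> n \<Longrightarrow> n = 0"
  shows "csf (e ` V \<union> \<phi> ` {0..M}, (\<lambda>d. e ` d) ` E \<union> (\<lambda>d. \<phi> ` d) ` path_edges M)
       = csf (pend ((V, E), u) M)"
proof -
  have "u \<in> V"
    using wf by (simp add: wf_rgraph_def)
  moreover have "x = u" if "x \<in> V" "e x = \<phi> M" for x
  proof -
    have "M = 0" using meet[OF that(1) order.refl that(2)] .
    then show ?thesis using that root e \<open>u \<in> V\<close> by (metis inj_onD)
  qed
  ultimately have rep: "spine_rep ((V, E), u) K1 M (path_edges M)
      (e ` V \<union> \<phi> ` {0..M}, (\<lambda>d. e ` d) ` E \<union> (\<lambda>d. \<phi> ` d) ` path_edges M) e (\<lambda>_. \<phi> M) \<phi>"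
    unfolding spine_rep_def K1_def using e \<phi> root meet
    by (auto simp: inj_on_eq_iff)
  have "csf (e ` V \<union> \<phi> ` {0..M}, (\<lambda>d. e ` d) ` E \<union> (\<lambda>d. \<phi> ` d) ` path_edges M)
      = csf (Pk M ((V, E), u) K1)"
    by (rule csf_spine_rep_eq[OF wf wf_K1 path_edges_subset rep Pk_spine_rep])
  then show ?thesis
    by (simp add: pend_def)
qed

lemma csf_pend_K1: "csf (pend K1 b) = csf (path_graph (Suc b))"
proof -
  have "path_graph (Suc b) = ((\<lambda>_. 0) ` {()} \<union> id ` {0..b}, (\<lambda>d. (\<lambda>_. 0) ` d) ` {} \<union> (\<lambda>d. id ` d) ` path_edges b)"
    by (auto simp: path_graph_def path_edges_def)
  then show ?thesis
    using csf_eq_csf_pend[of "{()}" "{}" "()" "\<lambda>_. 0 :: nat" id b] wf_K1 by (simp add: K1_def)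
qed

section \<open>Deleting edges at the centre of the star\<close>

definition path_edges_except :: "nat \<Rightarrow> nat set \<Rightarrow> nat set set" where
  "path_edges_except N C = {{n, Suc n} | n. n < N \<and> n \<notin> C}"

lemma path_edges_except_insert:
  assumes "a < N" "a \<notin> C"
  shows "path_edges_except N C = insert {a, Suc a} (path_edges_except N (insert a C))"
  using assms unfolding path_edges_except_def by auto

lemma path_graph_eq: "path_graph j = ({0..<j}, path_edges (j - 1))"
  unfolding path_graph_def path_edges_def by auto

text \<open>The star \<open>S^{g h j}(G, H, K1)\<close> laid out along the spine \<open>0, \<dots>, g + h + j\<close>: leg 1 reversed
  on \<open>0..g\<close> (so the centre is \<open>g\<close>), leg 3 on \<open>g..g + j\<close>, and leg 2 on \<open>g + j + 1..g + h + j\<close>,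
  attached to the centre by the edge \<open>{g, g + j + 1}\<close>.\<close>
definition star_spine_edges :: "nat \<Rightarrow> nat \<Rightarrow> nat \<Rightarrow> nat set set" where
  "star_spine_edges g h j = insert {g, g + j + 1} (path_edges_except (g + h + j) {g + j})"

lemma star_spine_edges_0:
  assumes "1 \<le> h"
  shows "star_spine_edges g h 0 = path_edges (g + h)"
proof -
  have "path_edges (g + h) = path_edges_except (g + h) {}"
    by (simp add: path_edges_def path_edges_except_def)
  then show ?thesis
    using path_edges_except_insert[of g "g + h" "{}"] assms by (simp add: star_spine_edges_def)
qed

lemma star_spine_edges_Suc:
  assumes "1 \<le> h"
  shows "star_spine_edges g h (Suc k)
       = insert {g, Suc g} (insert {g, g + k + 2} (path_edges_except (g + h + Suc k) {g, g + Suc k}))"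
    and "star_spine_edges (Suc g) h k
       = insert {g, Suc g} (insert {Suc g, g + k + 2} (path_edges_except (g + h + Suc k) {g, g + Suc k}))"
  using assms path_edges_except_insert[of g "g + h + Suc k" "{g + Suc k}"]
  by (simp_all add: star_spine_edges_def insert_commute)

text \<open>Deleting the edge \<open>{g, g + 1}\<close> of the star cuts leg 3 off the centre; what remains besides the
  path \<open>g + 1, \<dots>, g + j\<close> is \<open>P^{g+h}(G, H)\<close>, whose \<open>s\<close>-th path vertex sits at this position.\<close>
definition Pk_spine_index :: "nat \<Rightarrow> nat \<Rightarrow> nat \<Rightarrow> nat" where
  "Pk_spine_index g j s = (if s \<le> g then s else s + j)"

text \<open>Deleting \<open>{g, g + 1}\<close> and moving \<open>{g, g + j + 1}\<close> to \<open>{g + 1, g + j + 1}\<close> splits the spine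
  into \<open>0..g\<close> and the path \<open>g + h + j, g + h + j - 1, \<dots>, g + j + 1, g + 1, g + 2, \<dots>, g + j\<close>
  hanging from the root of \<open>H\<close>; this is the position of its \<open>s\<close>-th vertex.\<close>
definition pend_spine_index :: "nat \<Rightarrow> nat \<Rightarrow> nat \<Rightarrow> nat \<Rightarrow> nat" where
  "pend_spine_index g h j s = (if s < h then g + h + j - s else Suc g + (s - h))"

lemma mem_image_path_edgesI:
  "s < M \<Longrightarrow> e = {\<sigma> s, \<sigma> (Suc s)} \<Longrightarrow> e \<in> (\<lambda>d. \<sigma> ` d) ` path_edges M"
  unfolding image_path_edges by blast

lemma mem_path_edges_exceptI:
  "n < N \<Longrightarrow> n \<notin> C \<Longrightarrow> e = {n, Suc n} \<Longrightarrow> e \<in> path_edges_except N C"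
  unfolding path_edges_except_def by blast

lemma detach_leg_edges:
  assumes "1 \<le> h"
  shows "insert {g, g + j + 1} (path_edges_except (g + h + j) {g, g + j})
       = (\<lambda>d. Pk_spine_index g j ` d) ` path_edges (g + h) \<union> (\<lambda>d. (+) (Suc g) ` d) ` path_edges (j - 1)"
    (is "?L = ?P \<union> ?J")
proof (rule set_eqI, rule iffI)
  fix e assume "e \<in> ?L"
  then consider "e = {g, g + j + 1}" | n where "n < g + h + j" "n \<noteq> g" "n \<noteq> g + j" "e = {n, Suc n}"
    by (auto simp: path_edges_except_def)
  then show "e \<in> ?P \<union> ?J"
  proof cases
    case 1
    then show ?thesis
      using assms by (intro UnI1 mem_image_path_edgesI[of g]) (auto simp: Pk_spine_index_def)
  next
    case (2 n)
    consider "n < g" | "g < n" "n < g + j" | "g + j < n"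
      using 2 by linarith
    then show ?thesis
    proof cases
      case 1
      then show ?thesis
        using 2 by (intro UnI1 mem_image_path_edgesI[of n]) (auto simp: Pk_spine_index_def)
    next
      case 3
      then show ?thesis
        using 2 by (intro UnI1 mem_image_path_edgesI[of "n - j"]) (auto simp: Pk_spine_index_def)
    qed (use 2 in \<open>intro UnI2 mem_image_path_edgesI[of "n - Suc g"], auto\<close>)
  qed
next
  fix e assume "e \<in> ?P \<union> ?J"
  then consider s where "s < g + h" "e = {Pk_spine_index g j s, Pk_spine_index g j (Suc s)}"
    | i where "i < j - 1" "e = {Suc g + i, Suc g + Suc i}"
    unfolding image_path_edges by blast
  then show "e \<in> ?L"
  proof cases
    case (1 s)
    consider "s < g" | "s = g" | "g < s"
      by linarith
    then show ?thesis
    proof cases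
      case 1
      then show ?thesis
        using \<open>s < g + h\<close> \<open>e = _\<close>
        by (intro insertI2 mem_path_edges_exceptI[of s]) (auto simp: Pk_spine_index_def)
    next
      case 3
      then show ?thesis
        using \<open>s < g + h\<close> \<open>e = _\<close>
        by (intro insertI2 mem_path_edges_exceptI[of "s + j"]) (auto simp: Pk_spine_index_def)
    qed (use \<open>e = _\<close> in \<open>simp add: Pk_spine_index_def\<close>)
  next
    case (2 i)
    then show ?thesis
      by (intro insertI2 mem_path_edges_exceptI[of "Suc g + i"]) auto
  qed
qed

lemma detach_leg_vertices:
  "{0..g + h + j} = Pk_spine_index g j ` {0..g + h} \<union> (+) (Suc g) ` {0..<j}"
proof (rule set_eqI, rule iffI)
  fix n assume "n \<in> {0..g + h + j}"
  then consider "n \<le> g" | "g < n" "n \<le> g + j" | "g + j < n" "n \<le> g + h + j"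
    by fastforce
  then show "n \<in> Pk_spine_index g j ` {0..g + h} \<union> (+) (Suc g) ` {0..<j}"
  proof cases
    case 1
    then show ?thesis by (intro UnI1 image_eqI[of _ _ n]) (auto simp: Pk_spine_index_def)
  next
    case 2
    then show ?thesis by (intro UnI2 image_eqI[of _ _ "n - Suc g"]) auto
  next
    case 3
    then show ?thesis by (intro UnI1 image_eqI[of _ _ "n - j"]) (auto simp: Pk_spine_index_def)
  qed
qed (auto simp: Pk_spine_index_def)

lemma split_centre_edges:
  assumes "1 \<le> h" "1 \<le> j"
  shows "insert {Suc g, g + j + 1} (path_edges_except (g + h + j) {g, g + j})
       = path_edges g \<union> (\<lambda>d. pend_spine_index g h j ` d) ` path_edges (h + j - 1)"
    (is "?L = ?G \<union> ?H")
proof (rule set_eqI, rule iffI)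
  fix e assume "e \<in> ?L"
  then consider "e = {Suc g, g + j + 1}" | n where "n < g + h + j" "n \<noteq> g" "n \<noteq> g + j" "e = {n, Suc n}"
    by (auto simp: path_edges_except_def)
  then show "e \<in> ?G \<union> ?H"
  proof cases
    case 1
    then show ?thesis
      using assms by (intro UnI2 mem_image_path_edgesI[of "h - 1"]) (auto simp: pend_spine_index_def)
  next
    case (2 n)
    consider "n < g" | "g < n" "n < g + j" | "g + j < n"
      using 2 by linarith
    then show ?thesis
    proof cases
      case 1
      then show ?thesis
        using 2 by (auto simp: path_edges_def)
    next
      case 2
      then show ?thesis
        using \<open>e = {n, Suc n}\<close>
        by (intro UnI2 mem_image_path_edgesI[of "h + (n - Suc g)"]) (auto simp: pend_spine_index_def)
    next
      case 3
      then show ?thesis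
        using 2 by (intro UnI2 mem_image_path_edgesI[of "g + h + j - Suc n"])
          (auto simp: pend_spine_index_def)
    qed
  qed
next
  fix e assume "e \<in> ?G \<union> ?H"
  then consider n where "n < g" "e = {n, Suc n}"
    | s where "s < h + j - 1" "e = {pend_spine_index g h j s, pend_spine_index g h j (Suc s)}"
    unfolding image_path_edges by (auto simp: path_edges_def)
  then show "e \<in> ?L"
  proof cases
    case (1 n)
    then show ?thesis
      by (intro insertI2 mem_path_edges_exceptI[of n]) auto
  next
    case (2 s)
    consider "Suc s < h" | "Suc s = h" | "h \<le> s"
      by linarith
    then show ?thesis
    proof cases
      case 1
      then show ?thesis
        using 2 by (intro insertI2 mem_path_edges_exceptI[of "g + h + j - Suc s"])
          (auto simp: pend_spine_index_def)
    next
      case 3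
      then show ?thesis
        using 2 by (intro insertI2 mem_path_edges_exceptI[of "Suc g + (s - h)"])
          (auto simp: pend_spine_index_def)
    qed (use 2 in \<open>auto simp: pend_spine_index_def\<close>)
  qed
qed

lemma split_centre_vertices:
  assumes "1 \<le> h" "1 \<le> j"
  shows "{0..g + h + j} = {0..g} \<union> pend_spine_index g h j ` {0..h + j - 1}"
proof (rule set_eqI, rule iffI)
  fix n assume "n \<in> {0..g + h + j}"
  then consider "n \<le> g" | "g < n" "n \<le> g + j" | "g + j < n" "n \<le> g + h + j"
    by fastforce
  then show "n \<in> {0..g} \<union> pend_spine_index g h j ` {0..h + j - 1}"
  proof cases
    case 2
    then show ?thesis
      by (intro UnI2 image_eqI[of _ _ "h + (n - Suc g)"]) (auto simp: pend_spine_index_def)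
  next
    case 3
    then show ?thesis
      by (intro UnI2 image_eqI[of _ _ "g + h + j - n"]) (auto simp: pend_spine_index_def)
  qed simp
qed (use assms in \<open>auto simp: pend_spine_index_def\<close>)

lemma csf_spine_detach_leg:
  assumes wf: "wf_rgraph G" "wf_rgraph H" and h: "1 \<le> h"
  shows "csf (spine_graph (g + h + j) (insert {g, g + j + 1} (path_edges_except (g + h + j) {g, g + j})) G H)
       = sf_mult (csf (path_graph j)) (csf (Pk (g + h) G H))"
proof -
  obtain VG EG u VH EH v where G: "G = ((VG, EG), u)" and H: "H = ((VH, EH), v)"
    by (metis prod.collapse)
  have VG: "finite VG" "\<forall>e\<in>EG. e \<subseteq> VG" and VH: "finite VH" "\<forall>e\<in>EH. e \<subseteq> VH"
    using wf by (auto simp: G H wf_rgraph_def wf_graph_def)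
  define N where "N = g + h + j"
  define \<sigma> where "\<sigma> = Pk_spine_index g j"
  define \<tau> :: "nat \<Rightarrow> ('a + 'b) + nat" where "\<tau> i = Inr (Suc g + i)" for i
  define A where "A = spine_embG u ` VG \<union> spine_embH N v ` VH \<union> Inr ` \<sigma> ` {0..g + h}"
  define EA where "EA = (\<lambda>e. spine_embG u ` e) ` EG \<union> (\<lambda>e. spine_embH N v ` e) ` EH
    \<union> (\<lambda>e. Inr ` \<sigma> ` e) ` path_edges (g + h)"
  have "spine_graph N (insert {g, g + j + 1} (path_edges_except N {g, g + j})) G H
      = (\<tau> ` {0..<j} \<union> A, (\<lambda>e. \<tau> ` e) ` path_edges (j - 1) \<union> EA)"
    unfolding spine_graph_def N_def detach_leg_edges[OF h] detach_leg_vertices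
    by (auto simp: A_def EA_def G H N_def \<sigma>_def \<tau>_def image_image image_Un)
  moreover have "csf (\<tau> ` {0..<j} \<union> A, (\<lambda>e. \<tau> ` e) ` path_edges (j - 1) \<union> EA)
      = sf_mult (csf (\<tau> ` {0..<j}, (\<lambda>e. \<tau> ` e) ` path_edges (j - 1))) (csf (A, EA))"
  proof (rule csf_disjoint_union)
    show "\<tau> ` {0..<j} \<inter> A = {}"
      using h by (auto simp: A_def \<tau>_def \<sigma>_def N_def Pk_spine_index_def spine_embG_def spine_embH_def)
    show "\<forall>e\<in>(\<lambda>e. \<tau> ` e) ` path_edges (j - 1). e \<subseteq> \<tau> ` {0..<j}"
      by (auto simp: path_edges_def)
    show "\<forall>e\<in>EA. e \<subseteq> A"
      using VG VH by (fastforce simp: A_def EA_def path_edges_def)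
  qed (use VG VH in \<open>simp_all add: A_def\<close>)
  moreover have "csf (\<tau> ` {0..<j}, (\<lambda>e. \<tau> ` e) ` path_edges (j - 1)) = csf (path_graph j)"
    unfolding path_graph_eq by (rule csf_inj_image) (auto simp: \<tau>_def inj_on_def path_edges_def)
  moreover have "csf (A, EA) = csf (Pk (g + h) G H)"
  proof -
    have "inj_on \<sigma> {0..g + h}" "\<sigma> 0 = 0" "\<sigma> (g + h) = N"
      using h by (auto simp: \<sigma>_def N_def Pk_spine_index_def inj_on_def)
    from spine_rep_reindex[OF this, of VG EG u VH EH v "path_edges (g + h)"]
    have "spine_rep G H (g + h) (path_edges (g + h)) (A, EA) (spine_embG u) (spine_embH N v) (Inr \<circ> \<sigma>)"
      by (simp add: A_def EA_def G H image_comp)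
    then show ?thesis
      using csf_spine_rep[OF wf path_edges_subset] csf_Pk_eq_spine_graph[OF wf] by simp
  qed
  ultimately show ?thesis
    by (simp add: N_def)
qed

lemma csf_spine_split_centre:
  assumes wf: "wf_rgraph G" "wf_rgraph H" and h: "1 \<le> h" and j: "1 \<le> j"
  shows "csf (spine_graph (g + h + j) (insert {Suc g, g + j + 1} (path_edges_except (g + h + j) {g, g + j})) G H)
       = sf_mult (csf (pend G g)) (csf (pend H (h + j - 1)))"
proof -
  obtain VG EG u VH EH v where G: "G = ((VG, EG), u)" and H: "H = ((VH, EH), v)"
    by (metis prod.collapse)
  have VG: "finite VG" "\<forall>e\<in>EG. e \<subseteq> VG" and VH: "finite VH" "\<forall>e\<in>EH. e \<subseteq> VH"
    using wf by (auto simp: G H wf_rgraph_def wf_graph_def)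
  define N where "N = g + h + j"
  define \<rho> where "\<rho> = pend_spine_index g h j"
  have \<rho>_range: "Suc g \<le> \<rho> s \<and> \<rho> s \<le> N" if "s \<le> h + j - 1" for s
    using that h by (auto simp: \<rho>_def N_def pend_spine_index_def)
  define A :: "(('a + 'b) + nat) set" where "A = spine_embG u ` VG \<union> Inr ` {0..g}"
  define EA :: "(('a + 'b) + nat) set set"
    where "EA = (\<lambda>e. spine_embG u ` e) ` EG \<union> (\<lambda>e. Inr ` e) ` path_edges g"
  define B :: "(('a + 'b) + nat) set" where "B = spine_embH N v ` VH \<union> Inr ` \<rho> ` {0..h + j - 1}"
  define EB :: "(('a + 'b) + nat) set set"
    where "EB = (\<lambda>e. spine_embH N v ` e) ` EH \<union> (\<lambda>e. Inr ` \<rho> ` e) ` path_edges (h + j - 1)"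
  have "spine_graph N (insert {Suc g, g + j + 1} (path_edges_except N {g, g + j})) G H = (A \<union> B, EA \<union> EB)"
    unfolding spine_graph_def N_def split_centre_edges[OF h j] split_centre_vertices[OF h j]
    by (auto simp: A_def EA_def B_def EB_def G H N_def \<rho>_def image_image image_Un)
  moreover have "csf (A \<union> B, EA \<union> EB) = sf_mult (csf (A, EA)) (csf (B, EB))"
  proof (rule csf_disjoint_union)
    show "A \<inter> B = {}"
      using \<rho>_range h by (fastforce simp: A_def B_def N_def spine_embG_def spine_embH_def)
    show "\<forall>e\<in>EA. e \<subseteq> A" "\<forall>e\<in>EB. e \<subseteq> B"
      using VG VH by (fastforce simp: A_def EA_def B_def EB_def path_edges_def)+
  qed (use VG VH in \<open>simp_all add: A_def B_def\<close>)
  moreover have "csf (A, EA) = csf (pend G g)"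
    unfolding A_def EA_def G
    by (rule csf_eq_csf_pend)
      (use wf in \<open>auto simp: G spine_embG_def inj_on_def wf_rgraph_def split: if_splits\<close>)
  moreover have "csf (B, EB) = csf (pend H (h + j - 1))"
    unfolding B_def EB_def H image_comp
  proof (rule csf_eq_csf_pend)
    show "inj_on (Inr \<circ> \<rho>) {0..h + j - 1}"
      by (auto simp: \<rho>_def pend_spine_index_def inj_on_def)
    show "n = 0" if "y \<in> VH" "n \<le> h + j - 1" "spine_embH N v y = (Inr \<circ> \<rho>) n" for y n
      using that h by (auto simp: \<rho>_def N_def pend_spine_index_def spine_embH_def split: if_splits)
  qed (use wf h in \<open>auto simp: H \<rho>_def N_def pend_spine_index_def spine_embH_def inj_on_def\<close>)
  ultimately show ?thesis
    by (simp add: N_def)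
qed

lemma csf_star_spine_step:
  assumes wf: "wf_rgraph G" "wf_rgraph H" and h: "1 \<le> h"
  shows "csf (spine_graph (g + h + Suc k) (star_spine_edges g h (Suc k)) G H) m
       = csf (spine_graph (Suc g + h + k) (star_spine_edges (Suc g) h k) G H) m
         + sf_mult (csf (path_graph (Suc k))) (csf (Pk (g + h) G H)) m
         - sf_mult (csf (pend G g)) (csf (pend H (h + k))) m"
proof -
  let ?N = "g + h + Suc k"
  let ?D = "path_edges_except ?N {g, g + Suc k}"
  let ?X = "\<lambda>T. csf (spine_graph ?N T G H) m"
  obtain V E where VE: "spine_graph ?N ?D G H = (V, E)"
    by fastforce
  have ins: "spine_graph N (insert {a, b} T) G H
      = (fst (spine_graph N T G H), insert {Inr a, Inr b} (snd (spine_graph N T G H)))" for N a b T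
    by (simp add: spine_graph_def)
  have "finite V"
    using VE wf by (auto simp: spine_graph_def wf_rgraph_def wf_graph_def)
  then have "?X (star_spine_edges g h (Suc k)) - ?X (insert {g, g + Suc k + 1} ?D)
      = ?X (star_spine_edges (Suc g) h k) - ?X (insert {Suc g, g + Suc k + 1} ?D)"
    using csf_triple_deletion[of V "Inr g" "Inr (Suc g)" "Inr (g + k + 2)" E m] VE
    by (simp add: star_spine_edges_Suc[OF h] ins)
  then show ?thesis
    using csf_spine_detach_leg[OF wf h, where j = "Suc k"] csf_spine_split_centre[OF wf h, where j = "Suc k"]
    by (simp add: algebra_simps)
qed

lemma closed_form_of_recurrence:
  fixes F :: "nat \<Rightarrow> nat \<Rightarrow> 'x::ab_group_add"
  assumes base: "\<And>g. F 0 g = a 0 g"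
    and step: "\<And>k g. F (Suc k) g = F k (Suc g) + a (Suc k) g - b g k"
  shows "F j g = (\<Sum>i = 0..j. a i (g + j - i)) - (\<Sum>i = 1..j. b (g + i - 1) (j - i))"
proof (induction j arbitrary: g)
  case 0
  then show ?case by (simp add: base)
next
  case (Suc k)
  have a_sum: "(\<Sum>i = 0..Suc k. a i (g + Suc k - i)) = (\<Sum>i = 0..k. a i (Suc g + k - i)) + a (Suc k) g"
    by (simp add: sum.atLeast0_atMost_Suc)
  have "(\<Sum>i = 1..Suc k. b (g + i - 1) (Suc k - i))
      = b g k + (\<Sum>i = Suc 1..Suc k. b (g + i - 1) (Suc k - i))"
    by (simp add: sum.atLeast_Suc_atMost)
  also have "(\<Sum>i = Suc 1..Suc k. b (g + i - 1) (Suc k - i)) = (\<Sum>i = 1..k. b (Suc g + i - 1) (k - i))"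
    by (simp only: sum.shift_bounds_cl_Suc_ivl) simp
  finally have b_sum: "(\<Sum>i = 1..Suc k. b (g + i - 1) (Suc k - i))
      = b g k + (\<Sum>i = 1..k. b (Suc g + i - 1) (k - i))" .
  show ?case
    unfolding step a_sum b_sum Suc.IH by (simp add: algebra_simps)
qed

lemma csf_star_spine:
  assumes wf: "wf_rgraph G" "wf_rgraph H" and h: "1 \<le> h"
  shows "csf (spine_graph (g + h + j) (star_spine_edges g h j) G H) m
     = (\<Sum>i = 0..j. sf_mult (csf (path_graph i)) (csf (Pk (g + h + j - i) G H)) m)
       - (\<Sum>i = 1..j. sf_mult (csf (pend G (g + i - 1))) (csf (pend H (h + j - i))) m)"
proof -
  let ?a = "\<lambda>i n. sf_mult (csf (path_graph i)) (csf (Pk (n + h) G H)) m"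
  let ?b = "\<lambda>x y. sf_mult (csf (pend G x)) (csf (pend H (h + y))) m"
  have "csf (spine_graph (g + h + j) (star_spine_edges g h j) G H) m
      = (\<Sum>i = 0..j. ?a i (g + j - i)) - (\<Sum>i = 1..j. ?b (g + i - 1) (j - i))"
  proof (rule closed_form_of_recurrence[where F = "\<lambda>j g. csf (spine_graph (g + h + j) (star_spine_edges g h j) G H) m"])
    show "csf (spine_graph (g + h + 0) (star_spine_edges g h 0) G H) m = ?a 0 g" for g
      using csf_Pk_eq_spine_graph[OF wf, of "g + h"]
      by (simp add: star_spine_edges_0[OF h] sf_mult_csf_path_graph_0 add.commute)
  qed (use csf_star_spine_step[OF wf h] in simp)
  also have "\<dots> = (\<Sum>i = 0..j. sf_mult (csf (path_graph i)) (csf (Pk (g + h + j - i) G H)) m)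
       - (\<Sum>i = 1..j. sf_mult (csf (pend G (g + i - 1))) (csf (pend H (h + j - i))) m)"
    by (intro arg_cong2[where f = "(-)"] sum.cong) (auto simp: algebra_simps)
  finally show ?thesis .
qed

section \<open>The star as a spine graph\<close>

definition leg2_spine_index :: "nat \<Rightarrow> nat \<Rightarrow> nat \<Rightarrow> nat" where
  "leg2_spine_index g j s = (if s = 0 then g else g + j + s)"

lemma star_spine_edges_eq_legs:
  assumes "1 \<le> h"
  shows "star_spine_edges g h j = (\<lambda>d. (\<lambda>s. g - s) ` d) ` path_edges g
     \<union> (\<lambda>d. leg2_spine_index g j ` d) ` path_edges h \<union> (\<lambda>d. (+) g ` d) ` path_edges j"
    (is "_ = ?L1 \<union> ?L2 \<union> ?L3")
proof (rule set_eqI, rule iffI)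
  fix e assume "e \<in> star_spine_edges g h j"
  then consider "e = {g, g + j + 1}" | n where "n < g + h + j" "n \<noteq> g + j" "e = {n, Suc n}"
    by (auto simp: star_spine_edges_def path_edges_except_def)
  then show "e \<in> ?L1 \<union> ?L2 \<union> ?L3"
  proof cases
    case 1
    then show ?thesis
      using assms by (intro UnI1 UnI2 mem_image_path_edgesI[of 0]) (auto simp: leg2_spine_index_def)
  next
    case (2 n)
    consider "n < g" | "g \<le> n" "n < g + j" | "g + j < n"
      using 2 by linarith
    then show ?thesis
    proof cases
      case 1
      then show ?thesis
        using 2 by (intro UnI1 mem_image_path_edgesI[of "g - Suc n"]) auto
    next
      case 2
      then show ?thesis
        using \<open>e = {n, Suc n}\<close> by (intro UnI2 mem_image_path_edgesI[of "n - g"]) auto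
    next
      case 3
      then show ?thesis
        using 2 by (intro UnI1 UnI2 mem_image_path_edgesI[of "n - g - j"]) (auto simp: leg2_spine_index_def)
    qed
  qed
next
  fix e assume "e \<in> ?L1 \<union> ?L2 \<union> ?L3"
  then consider s where "s < g" "e = {g - s, g - Suc s}"
    | s where "s < h" "e = {leg2_spine_index g j s, leg2_spine_index g j (Suc s)}"
    | s where "s < j" "e = {g + s, g + Suc s}"
    unfolding image_path_edges by blast
  then show "e \<in> star_spine_edges g h j"
  proof cases
    case (1 s)
    then show ?thesis
      unfolding star_spine_edges_def
      by (intro insertI2 mem_path_edges_exceptI[of "g - Suc s"]) auto
  next
    case (2 s)
    then show ?thesis
      unfolding star_spine_edges_def
      by (cases "s = 0") (auto simp: leg2_spine_index_def intro!: mem_path_edges_exceptI[of "g + j + s"])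
  next
    case (3 s)
    then show ?thesis
      unfolding star_spine_edges_def
      by (intro insertI2 mem_path_edges_exceptI[of "g + s"]) auto
  qed
qed

lemma star_spine_vertices_eq_legs:
  "{0..g + h + j} = (\<lambda>s. g - s) ` {0..g} \<union> leg2_spine_index g j ` {0..h} \<union> (+) g ` {0..j}"
proof (rule set_eqI, rule iffI)
  fix n assume "n \<in> {0..g + h + j}"
  then consider "n \<le> g" | "g < n" "n \<le> g + j" | "g + j < n" "n \<le> g + h + j"
    by fastforce
  then show "n \<in> (\<lambda>s. g - s) ` {0..g} \<union> leg2_spine_index g j ` {0..h} \<union> (+) g ` {0..j}"
  proof cases
    case 1
    then show ?thesis by (intro UnI1 image_eqI[of _ _ "g - n"]) auto
  next
    case 2
    then show ?thesis by (intro UnI2 image_eqI[of _ _ "n - g"]) auto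
  next
    case 3
    then show ?thesis
      by (intro UnI1 UnI2 image_eqI[of _ _ "n - g - j"]) (auto simp: leg2_spine_index_def)
  qed
qed (auto simp: leg2_spine_index_def)

definition star_spine_vertex :: "nat \<Rightarrow> nat \<Rightarrow> nat \<Rightarrow> 'a \<Rightarrow> 'b \<Rightarrow> nat \<Rightarrow> ('a + 'b + unit) + nat \<times> nat" where
  "star_spine_vertex g h j u v n =
    (if n = g then Inr (0, 0) else if n = 0 then Inl (Inl u) else if n < g then Inr (1, g - n)
     else if n < g + j then Inr (3, n - g) else if n = g + j then Inl (Inr (Inr ()))
     else if n < g + h + j then Inr (2, n - g - j) else Inl (Inr (Inl v)))"

lemma star_K1_eq:
  fixes g h j :: nat and u :: 'a and v :: 'b
  assumes h: "1 \<le> h"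
  defines "eG \<equiv> \<lambda>x. if g = 0 \<and> x = u then Inr (0, 0) else Inl (Inl x)"
    and "eH \<equiv> \<lambda>y :: 'b. Inl (Inr (Inl y)) :: ('a + 'b + unit) + nat \<times> nat"
    and "\<phi> \<equiv> star_spine_vertex g h j u v"
  shows "star g h j ((VG, EG), u) ((VH, EH), v) K1
       = (eG ` VG \<union> eH ` VH \<union> \<phi> ` {0..g + h + j},
          (\<lambda>e. eG ` e) ` EG \<union> (\<lambda>e. eH ` e) ` EH \<union> (\<lambda>e. \<phi> ` e) ` star_spine_edges g h j)"
proof -
  define c :: "('a + 'b + unit) + nat \<times> nat" where "c = Inr (0, 0)"
  define w :: "('a + 'b + unit) + nat \<times> nat" where "w = (if j = 0 then c else Inl (Inr (Inr ())))"
  define leg1 where "leg1 = pathpt c (eG u) (\<lambda>s. Inr (1, s)) g"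
  define leg2 where "leg2 = pathpt c (eH v) (\<lambda>s. Inr (2, s)) h"
  define leg3 where "leg3 = pathpt c w (\<lambda>s. Inr (3, s)) j"
  have star: "star g h j ((VG, EG), u) ((VH, EH), v) K1
      = ({c} \<union> eG ` VG \<union> eH ` VH \<union> {w} \<union> leg1 ` {0..g} \<union> leg2 ` {0..h} \<union> leg3 ` {0..j},
         (\<lambda>e. eG ` e) ` EG \<union> (\<lambda>e. eH ` e) ` EH \<union> (\<lambda>e. leg1 ` e) ` path_edges g
           \<union> (\<lambda>e. leg2 ` e) ` path_edges h \<union> (\<lambda>e. leg3 ` e) ` path_edges j)"
  proof -
    have "h = 0 \<longleftrightarrow> False" using h by simp
    then show ?thesis
      unfolding star_def K1_def Let_def leg_V_def leg_E_eq_image_path_edges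
        c_def w_def leg1_def leg2_def leg3_def eG_def eH_def
      by (simp only: fst_conv snd_conv image_insert image_empty Un_empty_right simp_thms if_False)
  qed
  have \<phi>1: "\<forall>s\<in>{0..g}. \<phi> (g - s) = leg1 s"
    by (auto simp: \<phi>_def leg1_def star_spine_vertex_def pathpt_def c_def eG_def)
  have \<phi>2: "\<forall>s\<in>{0..h}. \<phi> (leg2_spine_index g j s) = leg2 s"
    by (auto simp: \<phi>_def leg2_def star_spine_vertex_def pathpt_def c_def eH_def leg2_spine_index_def)
  have \<phi>3: "\<forall>s\<in>{0..j}. \<phi> (g + s) = leg3 s"
    by (auto simp: \<phi>_def leg3_def star_spine_vertex_def pathpt_def c_def w_def)
  have legs: "leg1 ` {0..g} \<union> leg2 ` {0..h} \<union> leg3 ` {0..j} = \<phi> ` {0..g + h + j}"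
    unfolding star_spine_vertices_eq_legs image_Un image_image
    using \<phi>1 \<phi>2 \<phi>3 by (intro arg_cong2[where f = "(\<union>)"] image_cong) auto
  have "c \<in> leg1 ` {0..g}" "w \<in> leg3 ` {0..j}"
    by (auto simp: leg1_def leg3_def w_def pathpt_def image_iff intro: bexI[of _ 0] bexI[of _ j])
  then have vertices: "{c} \<union> eG ` VG \<union> eH ` VH \<union> {w} \<union> leg1 ` {0..g} \<union> leg2 ` {0..h} \<union> leg3 ` {0..j}
      = eG ` VG \<union> eH ` VH \<union> \<phi> ` {0..g + h + j}"
    using legs by blast
  have edges: "(\<lambda>e. \<phi> ` e) ` star_spine_edges g h j = (\<lambda>e. leg1 ` e) ` path_edges g
      \<union> (\<lambda>e. leg2 ` e) ` path_edges h \<union> (\<lambda>e. leg3 ` e) ` path_edges j"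
    unfolding star_spine_edges_eq_legs[OF h] image_Un
    by (simp only: image_image_edges[where f = \<phi>, OF \<phi>1 path_edges_subset]
        image_image_edges[where f = \<phi>, OF \<phi>2 path_edges_subset]
        image_image_edges[where f = \<phi>, OF \<phi>3 path_edges_subset])
  show ?thesis
    unfolding star vertices edges by (simp add: Un_assoc)
qed

lemma star_K1_spine_rep:
  assumes "1 \<le> h"
  shows "spine_rep ((VG, EG), u) ((VH, EH), v) (g + h + j) (star_spine_edges g h j)
    (star g h j ((VG, EG), u) ((VH, EH), v) K1)
    (\<lambda>x. if g = 0 \<and> x = u then Inr (0, 0) else Inl (Inl x)) (\<lambda>y. Inl (Inr (Inl y)))
    (star_spine_vertex g h j u v)"
  unfolding star_K1_eq[OF assms] spine_rep_def using assms
  by (auto simp: inj_on_def star_spine_vertex_def split: if_splits)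

lemma csf_star_K1:
  assumes wf: "wf_rgraph G" "wf_rgraph H" and h: "1 \<le> h"
  shows "csf (star g h j G H K1) = csf (spine_graph (g + h + j) (star_spine_edges g h j) G H)"
proof -
  obtain VG EG u VH EH v where G: "G = ((VG, EG), u)" and H: "H = ((VH, EH), v)"
    by (metis prod.collapse)
  have "\<forall>e\<in>star_spine_edges g h j. e \<subseteq> {0..g + h + j}"
    using h by (auto simp: star_spine_edges_def path_edges_except_def)
  from csf_spine_rep[OF wf[unfolded G H] this star_K1_spine_rep[OF h]]
  show ?thesis
    unfolding G H .
qed

lemma sum_pend_K1_reflect:
  "(\<Sum>i = 1..j. sf_mult (csf (pend G (g + i - 1))) (csf (pend K1 (h + j - i))) m)
 = (\<Sum>i = 1..j. sf_mult (csf (path_graph (i + h))) (csf (pend G (g + j - i))) m)"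
proof -
  have "(\<Sum>i = 1..j. sf_mult (csf (pend G (g + i - 1))) (csf (pend K1 (h + j - i))) m)
      = (\<Sum>i = 1..j. sf_mult (csf (pend G (g + (j + 1 - i) - 1))) (csf (pend K1 (h + j - (j + 1 - i)))) m)"
    by (subst sum.atLeastAtMost_rev) simp
  also have "\<dots> = (\<Sum>i = 1..j. sf_mult (csf (path_graph (i + h))) (csf (pend G (g + j - i))) m)"
  proof (rule sum.cong)
    fix i assume "i \<in> {1..j}"
    then have "g + (j + 1 - i) - 1 = g + j - i" "Suc (h + j - (j + 1 - i)) = i + h"
      by auto
    then show "sf_mult (csf (pend G (g + (j + 1 - i) - 1))) (csf (pend K1 (h + j - (j + 1 - i)))) m
        = sf_mult (csf (path_graph (i + h))) (csf (pend G (g + j - i))) m"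
      using csf_pend_K1[of "h + j - (j + 1 - i)"] by (simp only: sf_mult_commute)
  qed simp
  finally show ?thesis .
qed

theorem corollary4p3:
  fixes G :: "'a rgraph" and H :: "'b rgraph" and g h j :: nat
  assumes "wf_rgraph G" and "wf_rgraph H" and "h \<ge> 1"
  shows "(csf (S2 g h j G H) =
           (\<lambda>m. (\<Sum>i = 0..j. sf_mult (csf (path_graph i)) (csf (Pk (g + h + j - i) G H)) m)
              - (\<Sum>i = 1..j. sf_mult (csf (pend G (g + i - 1))) (csf (pend H (h + j - i))) m)))
         \<and> (csf (S1 g h j G) =
           (\<lambda>m. (\<Sum>i = 0..j. sf_mult (csf (path_graph i)) (csf (pend G (g + j - i + h))) m)
              - (\<Sum>i = 1..j. sf_mult (csf (path_graph (i + h))) (csf (pend G (g + j - i))) m)))"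
proof
  show "csf (S2 g h j G H) = (\<lambda>m. (\<Sum>i = 0..j. sf_mult (csf (path_graph i)) (csf (Pk (g + h + j - i) G H)) m)
      - (\<Sum>i = 1..j. sf_mult (csf (pend G (g + i - 1))) (csf (pend H (h + j - i))) m))"
    using csf_star_K1[OF assms] csf_star_spine[OF assms] by (simp add: S2_def fun_eq_iff)
  have Pk_K1: "(\<Sum>i = 0..j. sf_mult (csf (path_graph i)) (csf (Pk (g + h + j - i) G K1)) m)
      = (\<Sum>i = 0..j. sf_mult (csf (path_graph i)) (csf (pend G (g + j - i + h))) m)" for m
    by (rule sum.cong) (auto simp: pend_def algebra_simps)
  show "csf (S1 g h j G) = (\<lambda>m. (\<Sum>i = 0..j. sf_mult (csf (path_graph i)) (csf (pend G (g + j - i + h))) m)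
      - (\<Sum>i = 1..j. sf_mult (csf (path_graph (i + h))) (csf (pend G (g + j - i))) m))"
    unfolding S1_def csf_star_K1[OF assms(1) wf_K1 assms(3)] fun_eq_iff
      csf_star_spine[OF assms(1) wf_K1 assms(3)] Pk_K1 sum_pend_K1_reflect
    by (intro allI refl)
qed

end
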